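(* Let $\mathcal{W}=\mathcal{W}_X$ be a wing in $\mathcal{C}_n$ of height $h<n$, and let $\mathcal{X}$ be a set of pairwise compatible indecomposable objects in $\mathcal{W}$. (i) $\mathcal{X}$ has at most $h$ elements. (ii) If $\mathcal{X}$ has fewer than $h$ elements, there exists a set $\widetilde{\mathcal{X}}$ of $h$ pairwise compatible indecomposable objects in $\mathcal{W}$ containing $\mathcal{X}$. (iii) If $\mathcal{X}$ has $h$ elements, then $X\in\mathcal{X}$.
   Context: Let $k$ be algebraically closed, $n\ge2$, $\mathcal{T}_n$ the tube of rank $n$ (finite-dimensional nilpotent representations of the cyclically oriented $\tilde A_{n-1}$-quiver; AR-translation $\tau$), $\mathcal{C}_n=D^b(\mathcal{T}_n)/\tau^{-1}[1]$ the cluster tube, with indecomposables identified with those of $\mathcal{T}_n$. Indecomposables have coordinates $(a,b)$, $a\in\mathbb{Z}/n$, $b\ge1$ the quasilength, with $\tau(a,b)=(a-1,b)$ and irreducible maps $(a,b)\to(a,b+1)$ and $(a,b)\to(a+1,b-1)$. For $X=(a,i)$, $i\le n-1$, the wing $\mathcal{W}_X$ is $\{(a+s,i'):s\ge0,i'\ge1,s+i'\le i\}$ and its height is $i$. Indecomposables $X,Y$ are compatible if $\operatorname{Ext}^1_{\mathcal{C}_n}(X,Y)=\operatorname{Ext}^1_{\mathcal{C}_n}(Y,X)=0$. *)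

theory Defs
  imports Main
begin

text \<open>An indecomposable is a pair (a,b) with a in {0..<n} (taken mod n) and b >= 1 the
quasilength. Convention: (a,b) is the uniserial nilpotent module with socle S_a
and composition factors S_a, S_(a+1), ..., S_(a+b-1) (indices mod n), so that
(a,b) -> (a,b+1) is the irreducible mono, (a,b) -> (a+1,b-1) the irreducible epi,
and tau (a,b) = (a-1,b).\<close>

type_synonym ind = "int \<times> nat"

definition is_ind :: "nat \<Rightarrow> ind \<Rightarrow> bool" where
  "is_ind n X \<longleftrightarrow> 0 \<le> fst X \<and> fst X < int n \<and> 1 \<le> snd X"

definition tau :: "nat \<Rightarrow> ind \<Rightarrow> ind" where
  "tau n X = ((fst X - 1) mod int n, snd X)"

text \<open>dim Hom_T((a,b),(c,d)): for uniserial modules the Hom space has a basis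
indexed by the lengths l of the possible images, i.e. those l with
1 <= l <= min b d such that the length-l quotient of (a,b) (top S_(a+b-1),
socle S_(a+b-l)) equals the length-l submodule of (c,d) (socle S_c).\<close>

definition dim_hom :: "nat \<Rightarrow> ind \<Rightarrow> ind \<Rightarrow> nat" where
  "dim_hom n X Y = card {l::nat. 1 \<le> l \<and> l \<le> min (snd X) (snd Y) \<and>
      (fst X + int (snd X) - int l) mod int n = fst Y mod int n}"

text \<open>Ext^1 in the (hereditary) tube via the Auslander-Reiten formula
Ext^1_T(X,Y) = D Hom_T(Y, tau X).\<close>

definition dim_ext_tube :: "nat \<Rightarrow> ind \<Rightarrow> ind \<Rightarrow> nat" where
  "dim_ext_tube n X Y = dim_hom n Y (tau n X)"

text \<open>In the cluster tube C_n = D^b(T_n)/tau^{-1}[1]: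
Ext^1_C(X,Y) = Ext^1_T(X,Y) (+) D Ext^1_T(Y,X).\<close>

definition dim_ext_cluster :: "nat \<Rightarrow> ind \<Rightarrow> ind \<Rightarrow> nat" where
  "dim_ext_cluster n X Y = dim_ext_tube n X Y + dim_ext_tube n Y X"

definition compatible :: "nat \<Rightarrow> ind \<Rightarrow> ind \<Rightarrow> bool" where
  "compatible n X Y \<longleftrightarrow> dim_ext_cluster n X Y = 0 \<and> dim_ext_cluster n Y X = 0"

definition wing :: "nat \<Rightarrow> ind \<Rightarrow> ind set" where
  "wing n X = {((fst X + int s) mod int n, i') | s i'. 1 \<le> i' \<and> s + i' \<le> snd X}"

definition pairwise_compatible :: "nat \<Rightarrow> ind set \<Rightarrow> bool" where
  "pairwise_compatible n S \<longleftrightarrow> (\<forall>x\<in>S. \<forall>y\<in>S. compatible n x y)"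

end

theory Submission
  imports Defs
begin

text \<open>Write the objects of the wing of X = (a, h) as (a + p, q - p) with 0 \<le> p < q \<le> h and
read (p, q) as the chord {p, q + 1} of a polygon with vertices 0, ..., h + 1. The Auslander-Reiten
formula shows that Ext^1 between two such objects is nonzero exactly when the chords cross, so
compatible sets are noncrossing sets of chords; the boundary chord {0, h + 1}, which is X, crosses
nothing. Maximal noncrossing sets are triangulations together with this chord and have h elements,
which follows by induction on h by contracting the boundary edge {h, h + 1}. Every compatible set
extends to a maximal one, which gives (i) and (ii), and a compatible set with h elements is already
maximal and so contains X.\<close>

definition intervals :: "nat \<Rightarrow> (nat \<times> nat) set" where
  "intervals h = {(p, q). p < q \<and> q \<le> h}"

definition crosses :: "nat \<times> nat \<Rightarrow> nat \<times> nat \<Rightarrow> bool" where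
  "crosses x y \<longleftrightarrow> fst x < fst y \<and> fst y \<le> snd x \<and> snd x < snd y"

definition noncrossing :: "(nat \<times> nat) set \<Rightarrow> bool" where
  "noncrossing S \<longleftrightarrow> (\<forall>x\<in>S. \<forall>y\<in>S. \<not> crosses x y)"

definition maximal_noncrossing :: "nat \<Rightarrow> (nat \<times> nat) set \<Rightarrow> bool" where
  "maximal_noncrossing h S \<longleftrightarrow> S \<subseteq> intervals h \<and> noncrossing S \<and>
     (\<forall>J\<in>intervals h. noncrossing (insert J S) \<longrightarrow> J \<in> S)"

lemma finite_intervals: "finite (intervals h)"
proof (rule finite_subset)
  show "intervals h \<subseteq> {0..h} \<times> {0..h}" by (auto simp: intervals_def)
qed simp

lemma crosses_irrefl [simp]: "\<not> crosses x x"
  by (simp add: crosses_def)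

lemma noncrossing_insert:
  "noncrossing (insert J S) \<longleftrightarrow> noncrossing S \<and> (\<forall>I\<in>S. \<not> crosses J I \<and> \<not> crosses I J)"
  by (auto simp: noncrossing_def)

lemma maximal_noncrossing_top:
  assumes "maximal_noncrossing h S" "1 \<le> h"
  shows "(0, h) \<in> S"
proof -
  have "S \<subseteq> intervals h" "noncrossing S" using assms(1) by (auto simp: maximal_noncrossing_def)
  then have "noncrossing (insert (0, h) S)"
    by (auto simp: noncrossing_insert crosses_def intervals_def)
  moreover have "(0, h) \<in> intervals h" using assms(2) by (simp add: intervals_def)
  ultimately show ?thesis using assms(1) by (auto simp: maximal_noncrossing_def)
qed

lemma noncrossing_extends_to_maximal:
  assumes "S \<subseteq> intervals h" "noncrossing S"
  shows "\<exists>T. S \<subseteq> T \<and> maximal_noncrossing h T"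
  using assms
proof (induction "card (intervals h - S)" arbitrary: S rule: less_induct)
  case less
  show ?case
  proof (cases "maximal_noncrossing h S")
    case False
    then obtain J where J: "J \<in> intervals h" "J \<notin> S" "noncrossing (insert J S)"
      using less.prems by (auto simp: maximal_noncrossing_def)
    have "card (intervals h - insert J S) < card (intervals h - S)"
      using J finite_intervals by (metis Diff_insert card_Diff1_less finite_Diff DiffI)
    then show ?thesis using less.hyps[of "insert J S"] less.prems J by blast
  qed blast
qed

definition cap_interval :: "nat \<Rightarrow> nat \<times> nat \<Rightarrow> nat \<times> nat" where
  "cap_interval m x = (fst x, min (snd x) m)"

text \<open>Contracting the boundary edge {m+1, m+2} of the polygon: the chords {p, m+2} become {p, m+1},
and the chord from m+2 to its largest neighbour apex merges with the side {apex, m+1}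
of the triangle {apex, m+1, m+2}.\<close>

locale maximal_noncrossing_succ =
  fixes m :: nat and S :: "(nat \<times> nat) set"
  assumes maximal: "maximal_noncrossing (Suc m) S"
begin

lemma subset: "S \<subseteq> intervals (Suc m)"
  using maximal by (simp add: maximal_noncrossing_def)

lemma not_crosses: "x \<in> S \<Longrightarrow> y \<in> S \<Longrightarrow> \<not> crosses x y"
  using maximal by (auto simp: maximal_noncrossing_def noncrossing_def)

lemma mem_if_noncrossing:
  assumes "J \<in> intervals (Suc m)" "\<And>I. I \<in> S \<Longrightarrow> \<not> crosses J I \<and> \<not> crosses I J"
  shows "J \<in> S"
  using maximal assms by (auto simp: maximal_noncrossing_def noncrossing_insert)

lemma bounded: "(p, q) \<in> S \<Longrightarrow> p < q \<and> q \<le> Suc m"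
  using subset by (auto simp: intervals_def)

definition apex :: nat where
  "apex = Max {p. (p, Suc m) \<in> S}"

lemma apex_mem: "(apex, Suc m) \<in> S"
  and apex_greatest: "(p, Suc m) \<in> S \<Longrightarrow> p \<le> apex"
proof -
  have fin: "finite {p. (p, Suc m) \<in> S}"
    by (rule finite_subset[of _ "{0..Suc m}"]) (auto dest: bounded)
  have "(0, Suc m) \<in> S" using maximal_noncrossing_top[OF maximal] by simp
  then show "(apex, Suc m) \<in> S" using Max_in[OF fin] by (auto simp: apex_def)
  show "(p, Suc m) \<in> S \<Longrightarrow> p \<le> apex" using Max_ge[OF fin] by (simp add: apex_def)
qed

lemma apex_le: "apex \<le> m"
  using bounded[OF apex_mem] by simp

lemma apex_side_mem:
  assumes "apex < m"
  shows "(apex, m) \<in> S"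
proof (rule mem_if_noncrossing)
  show "(apex, m) \<in> intervals (Suc m)" using assms by (simp add: intervals_def)
next
  fix I assume I: "I \<in> S"
  obtain x y where xy: "I = (x, y)" by force
  have "\<not> crosses I (apex, Suc m)" using I apex_mem not_crosses by blast
  moreover have "x \<le> apex" if "y = Suc m" using apex_greatest I xy that by blast
  ultimately show "\<not> crosses (apex, m) I \<and> \<not> crosses I (apex, m)"
    using bounded[of x y] I xy by (auto simp: crosses_def)
qed

definition contracted :: "(nat \<times> nat) set" where
  "contracted = cap_interval m ` (S - {(apex, Suc m)})"

lemma inj_on_cap_interval: "inj_on (cap_interval m) (S - {(apex, Suc m)})"
proof (rule inj_onI)
  fix x y assume x: "x \<in> S - {(apex, Suc m)}" and y: "y \<in> S - {(apex, Suc m)}"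
    and eq: "cap_interval m x = cap_interval m y"
  obtain p q p' q' where xy: "x = (p, q)" "y = (p', q')" by force
  show "x = y"
  proof (rule ccontr)
    assume "x \<noteq> y"
    with eq xy have "p' = p" "q \<noteq> q'" "min q m = min q' m" by (auto simp: cap_interval_def)
    with x y xy bounded[of p q] bounded[of p' q'] have p: "(p, m) \<in> S" "(p, Suc m) \<in> S" "p \<noteq> apex"
      by (auto simp: min_def le_Suc_eq split: if_splits)
    then have "p < apex" using apex_greatest by force
    then have "crosses (p, m) (apex, Suc m)" using apex_le by (simp add: crosses_def)
    then show False using p(1) apex_mem not_crosses by blast
  qed
qed

lemma card_contracted: "card S = Suc (card contracted)"
proof -
  have "finite S" using subset finite_intervals finite_subset by blast
  then have "card S = Suc (card (S - {(apex, Suc m)}))" using apex_mem by (rule card.remove)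
  then show ?thesis using card_image[OF inj_on_cap_interval] by (simp add: contracted_def)
qed

lemma contracted_subset: "contracted \<subseteq> intervals m"
proof
  fix J assume "J \<in> contracted"
  then obtain p q where pq: "(p, q) \<in> S" "(p, q) \<noteq> (apex, Suc m)" "J = (p, min q m)"
    unfolding contracted_def cap_interval_def by force
  have "p < apex" if "q = Suc m" using apex_greatest pq that by force
  then show "J \<in> intervals m" using bounded[OF pq(1)] pq(3) apex_le
    by (cases "q = Suc m") (auto simp: intervals_def)
qed

lemma noncrossing_contracted: "noncrossing contracted"
  unfolding noncrossing_def contracted_def
proof (intro ballI)
  fix u v assume "u \<in> cap_interval m ` (S - {(apex, Suc m)})" "v \<in> cap_interval m ` (S - {(apex, Suc m)})"
  then obtain x y where "x \<in> S" "y \<in> S" "u = cap_interval m x" "v = cap_interval m y" by blast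
  then show "\<not> crosses u v" using not_crosses[of x y]
    by (auto simp: crosses_def cap_interval_def min_def)
qed

lemma not_crosses_cap_interval:
  assumes J: "J \<in> intervals m" and noncross: "noncrossing (insert J contracted)" and I: "I \<in> S"
  shows "\<not> crosses J (cap_interval m I) \<and> \<not> crosses (cap_interval m I) J"
proof (cases "I = (apex, Suc m)")
  case False
  then show ?thesis using noncross I by (auto simp: noncrossing_insert contracted_def)
next
  case True
  show ?thesis
  proof (cases "apex < m")
    case True
    then have "cap_interval m (apex, m) \<in> contracted"
      using apex_side_mem by (auto simp: contracted_def)
    moreover have "cap_interval m (apex, m) = cap_interval m I"
      using \<open>I = (apex, Suc m)\<close> by (simp add: cap_interval_def)
    ultimately show ?thesis using noncross by (simp add: noncrossing_insert)
  next
    case False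
    then have "cap_interval m I = (m, m)" using apex_le \<open>I = (apex, Suc m)\<close> by (simp add: cap_interval_def)
    then show ?thesis using J by (auto simp: crosses_def intervals_def)
  qed
qed

lemma mem_contracted:
  assumes J: "(p, q) \<in> intervals m"
    and noncross: "\<And>I. I \<in> S \<Longrightarrow> \<not> crosses (p, q) (cap_interval m I) \<and> \<not> crosses (cap_interval m I) (p, q)"
  shows "(p, q) \<in> contracted"
proof -
  have pq: "p < q" "q \<le> m" using J by (auto simp: intervals_def)
  have cap_fixed: "cap_interval m (p, q) = (p, q)" using pq by (simp add: cap_interval_def)
  have noncross': "\<not> crosses (p, q) (x, min y m) \<and> \<not> crosses (x, min y m) (p, q)" if "(x, y) \<in> S" for x y
    using noncross[OF that] by (simp add: cap_interval_def)
  consider "q < m" | "q = m" "\<exists>x. (x, Suc m) \<in> S \<and> p < x" | "q = m" "\<forall>x. (x, Suc m) \<in> S \<longrightarrow> x \<le> p"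
    using pq by force
  then show ?thesis
  proof cases
    case 1
    have "(p, q) \<in> S"
    proof (rule mem_if_noncrossing)
      show "(p, q) \<in> intervals (Suc m)" using pq by (simp add: intervals_def)
      show "\<not> crosses (p, q) I \<and> \<not> crosses I (p, q)" if "I \<in> S" for I
        using that noncross'[of "fst I" "snd I"] 1 by (auto simp: crosses_def min_def split: if_splits)
    qed
    then show ?thesis using 1 cap_fixed by (force simp: contracted_def)
  next
    case 2
    then obtain x where x: "(x, Suc m) \<in> S" "p < x" by blast
    have "(p, Suc m) \<in> S"
    proof (rule mem_if_noncrossing)
      show "(p, Suc m) \<in> intervals (Suc m)" using pq by (simp add: intervals_def)
      fix I assume I: "I \<in> S"
      obtain y z where yz: "I = (y, z)" by force
      have "\<not> crosses (y, z) (x, Suc m)" using I yz x not_crosses by blast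
      then show "\<not> crosses (p, Suc m) I \<and> \<not> crosses I (p, Suc m)"
        using noncross'[of y z] I yz 2 x bounded[of y z] bounded[OF x(1)]
        by (auto simp: crosses_def min_def split: if_splits)
    qed
    moreover have "p \<noteq> apex" using x apex_greatest by force
    moreover have "cap_interval m (p, Suc m) = (p, q)" using 2 by (simp add: cap_interval_def)
    ultimately show ?thesis by (force simp: contracted_def)
  next
    case 3
    have "(p, q) \<in> S"
    proof (rule mem_if_noncrossing)
      show "(p, q) \<in> intervals (Suc m)" using pq by (simp add: intervals_def)
      fix I assume I: "I \<in> S"
      obtain y z where yz: "I = (y, z)" by force
      show "\<not> crosses (p, q) I \<and> \<not> crosses I (p, q)"
        using noncross'[of y z] I yz 3 pq bounded[of y z]
        by (auto simp: crosses_def min_def le_Suc_eq split: if_splits)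
    qed
    then show ?thesis using 3 cap_fixed by (force simp: contracted_def)
  qed
qed

lemma maximal_contracted: "maximal_noncrossing m contracted"
  unfolding maximal_noncrossing_def
proof (intro conjI ballI impI contracted_subset noncrossing_contracted)
  fix J assume "J \<in> intervals m" "noncrossing (insert J contracted)"
  then show "J \<in> contracted"
    using mem_contracted[of "fst J" "snd J"] not_crosses_cap_interval by simp
qed

end

lemma card_maximal_noncrossing: "maximal_noncrossing h S \<Longrightarrow> card S = h"
proof (induction h arbitrary: S)
  case 0
  then have "S = {}" by (auto simp: maximal_noncrossing_def intervals_def)
  then show ?case by simp
next
  case (Suc m)
  then interpret maximal_noncrossing_succ m S by unfold_locales
  show ?case using Suc.IH[OF maximal_contracted] card_contracted by simp
qed

definition interval_ind :: "nat \<Rightarrow> int \<Rightarrow> nat \<times> nat \<Rightarrow> ind" where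
  "interval_ind n a x = ((a + int (fst x)) mod int n, snd x - fst x)"

lemma mod_eq_iff_eq_if_dist_less:
  fixes x y n :: int
  assumes "\<bar>x - y\<bar> < n"
  shows "x mod n = y mod n \<longleftrightarrow> x = y"
proof
  assume "x mod n = y mod n"
  then have "n dvd x - y" by (simp add: mod_eq_dvd_iff)
  then show "x = y" using assms dvd_imp_le_int[of "x - y" n] by fastforce
qed simp

lemma dim_ext_tube_interval_ind:
  assumes "x \<in> intervals h" "y \<in> intervals h" "h < n"
  shows "dim_ext_tube n (interval_ind n a x) (interval_ind n a y) = (if crosses y x then 1 else 0)"
proof -
  obtain p q p' q' where xy: "x = (p, q)" "y = (p', q')" by force
  have b: "p < q" "q \<le> h" "p' < q'" "q' \<le> h" using assms xy by (auto simp: intervals_def)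
  have "((a + int p') mod int n + int (q' - p') - int l) mod int n = ((a + int p) mod int n - 1) mod int n
      \<longleftrightarrow> int q' + 1 = int p + int l" if "1 \<le> l" "l \<le> q' - p'" for l
  proof -
    have "((a + int p') mod int n + int (q' - p') - int l) mod int n = ((a + int p) mod int n - 1) mod int n
        \<longleftrightarrow> (a + int q' - int l) mod int n = (a + int p - 1) mod int n"
      using b by (simp add: of_nat_diff mod_diff_left_eq[symmetric, of "_ + _"] mod_add_left_eq)
    also have "\<dots> \<longleftrightarrow> a + int q' - int l = a + int p - 1"
      using that b assms(3) by (intro mod_eq_iff_eq_if_dist_less) (auto simp: of_nat_diff)
    finally show ?thesis by linarith
  qed
  then have "{l. 1 \<le> l \<and> l \<le> min (q' - p') (q - p) \<and>
      ((a + int p') mod int n + int (q' - p') - int l) mod int n = ((a + int p) mod int n - 1) mod int n}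
      = {l. 1 \<le> l \<and> l \<le> min (q' - p') (q - p) \<and> int q' + 1 = int p + int l}"
    by (intro Collect_cong) auto
  also have "\<dots> = (if crosses y x then {q' + 1 - p} else {})"
    using b xy by (auto simp: crosses_def)
  finally show ?thesis
    using xy by (simp add: dim_ext_tube_def dim_hom_def tau_def interval_ind_def)
qed

lemma compatible_interval_ind_iff:
  assumes "x \<in> intervals h" "y \<in> intervals h" "h < n"
  shows "compatible n (interval_ind n a x) (interval_ind n a y) \<longleftrightarrow> \<not> crosses x y \<and> \<not> crosses y x"
  using assms by (simp add: compatible_def dim_ext_cluster_def dim_ext_tube_interval_ind)

lemma pairwise_compatible_image_iff:
  assumes "S \<subseteq> intervals h" "h < n"
  shows "pairwise_compatible n (interval_ind n a ` S) \<longleftrightarrow> noncrossing S"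
  using compatible_interval_ind_iff[OF subsetD[OF assms(1)] subsetD[OF assms(1)] assms(2)]
  by (auto simp: pairwise_compatible_def noncrossing_def)

lemma wing_eq_image_intervals: "wing n X = interval_ind n (fst X) ` intervals (snd X)"
proof (intro equalityI subsetI)
  fix z assume "z \<in> wing n X"
  then obtain s i' where z: "z = ((fst X + int s) mod int n, i')" "1 \<le> i'" "s + i' \<le> snd X"
    by (auto simp: wing_def)
  then have "(s, s + i') \<in> intervals (snd X)" "z = interval_ind n (fst X) (s, s + i')"
    by (auto simp: intervals_def interval_ind_def)
  then show "z \<in> interval_ind n (fst X) ` intervals (snd X)" by blast
next
  fix z assume "z \<in> interval_ind n (fst X) ` intervals (snd X)"
  then obtain p q where "p < q" "q \<le> snd X" "z = ((fst X + int p) mod int n, q - p)"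
    by (auto simp: intervals_def interval_ind_def)
  then show "z \<in> wing n X" unfolding wing_def by force
qed

lemma inj_on_interval_ind:
  assumes "h < n"
  shows "inj_on (interval_ind n a) (intervals h)"
proof (rule inj_onI)
  fix x y assume "x \<in> intervals h" "y \<in> intervals h" and eq: "interval_ind n a x = interval_ind n a y"
  then obtain p q p' q' where xy: "x = (p, q)" "y = (p', q')" and b: "p < q" "q \<le> h" "p' < q'" "q' \<le> h"
    by (auto simp: intervals_def)
  have "(a + int p) mod int n = (a + int p') mod int n" "q - p = q' - p'"
    using eq xy by (auto simp: interval_ind_def)
  moreover have "\<bar>(a + int p) - (a + int p')\<bar> < int n" using b assms by auto
  ultimately show "x = y" using mod_eq_iff_eq_if_dist_less b xy by auto
qed

theorem lemma2p4:
  fixes n h :: nat and X :: ind and \<X> :: "ind set"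
  assumes "n \<ge> 2"
    and "is_ind n X"
    and "h = snd X"
    and "h < n"
    and "\<X> \<subseteq> wing n X"
    and "pairwise_compatible n \<X>"
  shows "card \<X> \<le> h \<and>
         (card \<X> < h \<longrightarrow> (\<exists>\<Y>. \<X> \<subseteq> \<Y> \<and> \<Y> \<subseteq> wing n X \<and>
            pairwise_compatible n \<Y> \<and> card \<Y> = h)) \<and>
         (card \<X> = h \<longrightarrow> X \<in> \<X>)"
proof -
  let ?E = "interval_ind n (fst X)"
  have wing: "wing n X = ?E ` intervals h" using wing_eq_image_intervals assms(3) by simp
  have inj: "inj_on ?E (intervals h)" using inj_on_interval_ind assms(4) .
  define S where "S = intervals h \<inter> ?E -` \<X>"
  have S: "S \<subseteq> intervals h" "\<X> = ?E ` S" using assms(5) wing by (auto simp: S_def)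
  have card_X: "card \<X> = card S" using S card_image inj_on_subset[OF inj] by metis
  have "noncrossing S" using assms(4,6) S pairwise_compatible_image_iff by metis
  then obtain T where T: "S \<subseteq> T" "maximal_noncrossing h T"
    using noncrossing_extends_to_maximal S(1) by blast
  have T_sub: "T \<subseteq> intervals h" and card_T: "card T = h"
    using T(2) card_maximal_noncrossing by (auto simp: maximal_noncrossing_def)
  have "finite T" using T_sub finite_intervals finite_subset by blast
  then have card_le: "card \<X> \<le> h" using card_X card_T card_mono T(1) by metis
  have "\<X> \<subseteq> ?E ` T" "?E ` T \<subseteq> wing n X" "pairwise_compatible n (?E ` T)" "card (?E ` T) = h"
    using S T T_sub card_T wing pairwise_compatible_image_iff[OF T_sub assms(4)]
      card_image[OF inj_on_subset[OF inj T_sub]] by (auto simp: maximal_noncrossing_def)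
  moreover have "X \<in> \<X>" if "card \<X> = h"
  proof -
    have "S = T" using card_subset_eq[OF \<open>finite T\<close> T(1)] that card_X card_T by simp
    then have "(0, h) \<in> S" using maximal_noncrossing_top[OF T(2)] assms(2,3) by (simp add: is_ind_def)
    moreover have "?E (0, h) = X" using assms(2,3) by (simp add: interval_ind_def is_ind_def prod_eq_iff)
    ultimately show ?thesis using S(2) by force
  qed
  ultimately show ?thesis using card_le by blast
qed

end
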